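(* Let $\mathrm{k}$ be an infinite field and $\mathcal{A}$ a unital associative $\mathrm{k}$-algebra satisfying $\mathbf{H}_{\mathrm{s}}$. Let $V$ be an $n$-dimensional $\mathrm{k}$-subspace of $\mathcal{A}$ with $V\cap U(\mathcal{A})\neq\emptyset$, and let $\{x_1,\ldots,x_n\}$ be a basis of $V$ with $x_1$ invertible. Let $X=\{x_1+\alpha x_2+\cdots+\alpha^{n-1}x_n\mid\alpha\in\mathrm{k}\}$. Then: (1) any $n$ vectors of $X$ corresponding to $n$ distinct values of $\alpha$ form a basis of $V$; (2) infinitely many elements $x_1+\alpha x_2+\cdots+\alpha^{n-1}x_n$, $\alpha\in\mathrm{k}$, are invertible; (3) $X$ contains a basis of $V$ consisting of invertible elements.
   Context: $U(\mathcal{A})$ is the group of invertible elements. Hypothesis $\mathbf{H}_{\mathrm{s}}$: $\mathcal{A}$ is finite-dimensional over $\mathrm{k}$, or $\mathrm{k}\in\{\mathbb{R},\mathbb{C}\}$ and $\mathcal{A}$ is a Banach algebra over $\mathrm{k}$, or $\mathcal{A}$ is a finite product of field extensions of $\mathrm{k}$. *)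

theory Defs
  imports "HOL-Analysis.Analysis"
begin

definition k_algebra :: "('a::field \<Rightarrow> 'b::ring_1 \<Rightarrow> 'b) \<Rightarrow> bool" where
  "k_algebra s \<longleftrightarrow> vector_space s \<and>
     (\<forall>c x y. s c (x * y) = s c x * y \<and> s c (x * y) = x * s c y)"

definition units_of_alg :: "'b::ring_1 set" where
  "units_of_alg = {x. \<exists>y. x * y = 1 \<and> y * x = 1}"

definition fin_dim_alg :: "('a::field \<Rightarrow> 'b::ring_1 \<Rightarrow> 'b) \<Rightarrow> bool" where
  "fin_dim_alg s \<longleftrightarrow> (\<exists>B. finite B \<and> module.span s B = UNIV)"

text \<open>H_s, case 2: k is (isomorphic as a field to) \<real> or \<complex>, via phi, and A is a
  Banach algebra over k with respect to a norm N.\<close>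
definition banach_alg :: "('a::field \<Rightarrow> 'b::ring_1 \<Rightarrow> 'b) \<Rightarrow> bool" where
  "banach_alg s \<longleftrightarrow>
    (\<exists>(\<phi>::'a \<Rightarrow> complex) (N::'b \<Rightarrow> real).
       inj \<phi> \<and> (\<forall>a b. \<phi> (a + b) = \<phi> a + \<phi> b \<and> \<phi> (a * b) = \<phi> a * \<phi> b) \<and> \<phi> 1 = 1 \<and>
       (range \<phi> = \<real> \<or> range \<phi> = UNIV) \<and>
       (\<forall>x. N x \<ge> 0) \<and> (\<forall>x. N x = 0 \<longleftrightarrow> x = 0) \<and>
       (\<forall>x y. N (x + y) \<le> N x + N y) \<and>
       (\<forall>c x. N (s c x) = cmod (\<phi> c) * N x) \<and>
       (\<forall>x y. N (x * y) \<le> N x * N y) \<and>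
       (\<forall>f::nat \<Rightarrow> 'b. (\<forall>e>0. \<exists>M. \<forall>m\<ge>M. \<forall>k\<ge>M. N (f m - f k) < e)
            \<longrightarrow> (\<exists>L. \<forall>e>0. \<exists>M. \<forall>m\<ge>M. N (f m - L) < e)))"

text \<open>H_s, case 3: A is a finite product of field extensions of k, expressed internally:
  A is commutative and 1 is a finite sum of nonzero pairwise orthogonal idempotents e
  such that each factor eA (a ring with unit e) is a field.\<close>
definition prod_fields_alg :: "('a::field \<Rightarrow> 'b::ring_1 \<Rightarrow> 'b) \<Rightarrow> bool" where
  "prod_fields_alg s \<longleftrightarrow>
    (\<forall>x y::'b. x * y = y * x) \<and>
    (\<exists>E::'b set. finite E \<and> 0 \<notin> E \<and> (\<forall>e\<in>E. e * e = e) \<and>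
       (\<forall>e\<in>E. \<forall>f\<in>E. e \<noteq> f \<longrightarrow> e * f = 0) \<and> sum id E = 1 \<and>
       (\<forall>e\<in>E. \<forall>x. e * x \<noteq> 0 \<longrightarrow> (\<exists>y. (e * x) * (e * y) = e)))"

definition H_s :: "('a::field \<Rightarrow> 'b::ring_1 \<Rightarrow> 'b) \<Rightarrow> bool" where
  "H_s s \<longleftrightarrow> fin_dim_alg s \<or> banach_alg s \<or> prod_fields_alg s"

definition vpt :: "('a::field \<Rightarrow> 'b::ring_1 \<Rightarrow> 'b) \<Rightarrow> nat \<Rightarrow> (nat \<Rightarrow> 'b) \<Rightarrow> 'a \<Rightarrow> 'b" where
  "vpt s n x \<alpha> = (\<Sum>i=1..n. s (\<alpha> ^ (i - 1)) (x i))"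

end

theory Submission
  imports Defs "Jordan_Normal_Form.Determinant"
begin

text \<open>Write \<open>x(\<alpha>) = x\<^sub>1 + \<alpha> x\<^sub>2 + \<dots> + \<alpha>^(n-1) x\<^sub>n\<close>. For distinct
  \<open>\<alpha>\<^sub>1, \<dots>, \<alpha>\<^sub>n\<close> the vectors \<open>x(\<alpha>\<^sub>j)\<close> are obtained from the basis
  \<open>x\<^sub>1, \<dots>, x\<^sub>n\<close> by an invertible Vandermonde matrix, so they form a basis of \<open>V\<close>.
  Since \<open>x(0) = x\<^sub>1\<close> is invertible, non-invertible values of the curve are rare:
  in a finite-dimensional algebra they are roots of the nonzero polynomial
  \<open>\<alpha> \<mapsto> det (left multiplication by x(\<alpha>))\<close>; in a finite product of fields a non-unit
  is annihilated by one of finitely many idempotents \<open>e\<close>, and \<open>e\<close> cannot annihilate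
  \<open>n\<close> values \<open>x(\<alpha>)\<close>, because these span \<open>V \<ni> x\<^sub>1\<close>; in a Banach algebra
  \<open>x(\<alpha>)\<close> is a small perturbation of \<open>x\<^sub>1\<close> for small \<open>\<alpha>\<close> and is inverted by a
  Neumann series. As \<open>k\<close> is infinite, infinitely many \<open>x(\<alpha>)\<close> are invertible, and any
  \<open>n\<close> of them form the required basis.\<close>

section \<open>Distinct parameters give a basis\<close>

lemma vandermonde_lincomb_eq_0:
  fixes a c :: "nat \<Rightarrow> 'a::field"
  assumes fin: "finite I" and inj: "inj_on a I"
    and vanish: "\<And>k. k < card I \<Longrightarrow> (\<Sum>j\<in>I. c j * a j ^ k) = 0"
    and j0: "j0 \<in> I"
  shows "c j0 = 0"
proof -
  \<comment> \<open>\<open>q\<close> has degree \<open>< card I\<close> and vanishes at every \<open>a j\<close> except \<open>a j0\<close>.\<close>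
  define q where "q = (\<Prod>l\<in>I - {j0}. [:- a l, 1:])"
  have "degree q \<le> (\<Sum>l\<in>I - {j0}. degree [:- a l, 1:])"
    unfolding q_def using fin degree_prod_sum_le[of "I - {j0}" "\<lambda>l. [:- a l, 1:]"] by (simp add: o_def)
  also have "\<dots> = card (I - {j0})" by simp
  also have "\<dots> < card I" using fin j0 by (rule card_Diff1_less)
  finally have deg: "degree q < card I" .
  have "(\<Sum>j\<in>I. c j * poly q (a j)) = (\<Sum>i\<le>degree q. coeff q i * (\<Sum>j\<in>I. c j * a j ^ i))"
    by (simp add: poly_altdef sum_distrib_left mult.left_commute sum.swap[of _ I])
  also have "\<dots> = 0" using vanish deg by simp
  finally have sum0: "(\<Sum>j\<in>I. c j * poly q (a j)) = 0" .
  have poly_q: "poly q (a j) = (\<Prod>l\<in>I - {j0}. a j - a l)" for j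
    by (simp add: q_def poly_prod)
  have "(\<Sum>j\<in>I. c j * poly q (a j)) = c j0 * poly q (a j0) + (\<Sum>j\<in>I - {j0}. c j * poly q (a j))"
    using fin j0 by (rule sum.remove)
  also have "(\<Sum>j\<in>I - {j0}. c j * poly q (a j)) = 0"
    using fin by (intro sum.neutral ballI) (auto simp: poly_q prod_zero_iff)
  finally have "c j0 * poly q (a j0) = 0" using sum0 by simp
  moreover have "poly q (a j0) \<noteq> 0"
    using fin inj j0 by (auto simp: poly_q prod_zero_iff inj_on_def)
  ultimately show ?thesis by simp
qed

context vector_space
begin

lemma independent_inj_image_iff:
  assumes inj: "inj_on f I" and fin: "finite I"
  shows "independent (f ` I) \<longleftrightarrow> (\<forall>c. (\<Sum>i\<in>I. scale (c i) (f i)) = 0 \<longrightarrow> (\<forall>i\<in>I. c i = 0))"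
proof -
  have reindex: "(\<Sum>v\<in>f ` I. g v) = (\<Sum>i\<in>I. g (f i))" for g :: "'b \<Rightarrow> 'b"
    using inj by (simp add: sum.reindex)
  show ?thesis
  proof
    assume indep: "independent (f ` I)"
    show "\<forall>c. (\<Sum>i\<in>I. scale (c i) (f i)) = 0 \<longrightarrow> (\<forall>i\<in>I. c i = 0)"
    proof (intro allI impI ballI)
      fix c i assume sum0: "(\<Sum>i\<in>I. scale (c i) (f i)) = 0" and i: "i \<in> I"
      define u where "u v = c (the_inv_into I f v)" for v
      have u: "u (f j) = c j" if "j \<in> I" for j
        using the_inv_into_f_f[OF inj that] by (simp add: u_def)
      have "(\<Sum>v\<in>f ` I. scale (u v) v) = 0" using sum0 u by (simp add: reindex)
      with indep fin have "\<forall>v\<in>f ` I. u v = 0" by (auto simp: dependent_finite)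
      then show "c i = 0" using u i by auto
    qed
  next
    assume scalars: "\<forall>c. (\<Sum>i\<in>I. scale (c i) (f i)) = 0 \<longrightarrow> (\<forall>i\<in>I. c i = 0)"
    show "independent (f ` I)"
    proof
      assume "dependent (f ` I)"
      then obtain u where u: "\<exists>v\<in>f ` I. u v \<noteq> 0" "(\<Sum>v\<in>f ` I. scale (u v) v) = 0"
        using fin by (auto simp: dependent_finite)
      then have "(\<Sum>i\<in>I. scale (u (f i)) (f i)) = 0" by (simp add: reindex)
      with scalars u(1) show False by auto
    qed
  qed
qed

lemma inj_on_if_scalars_zero:
  assumes scalars: "\<forall>c. (\<Sum>i\<in>I. scale (c i) (f i)) = 0 \<longrightarrow> (\<forall>i\<in>I. c i = 0)" and fin: "finite I"
  shows "inj_on f I"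
proof (rule inj_onI, rule ccontr)
  fix j k assume j: "j \<in> I" and k: "k \<in> I" and eq: "f j = f k" and "j \<noteq> k"
  define c where "c i = (if i = j then 1 else if i = k then -1 else (0::'a))" for i
  have "(\<Sum>i\<in>I. scale (c i) (f i)) = (\<Sum>i\<in>I. (if i = j then f i else 0) - (if i = k then f i else 0))"
    using \<open>j \<noteq> k\<close> by (intro sum.cong) (auto simp: c_def scale_minus_left)
  also have "\<dots> = 0" using fin j k eq by (simp add: sum_subtractf)
  finally have "c j = 0" using scalars j by blast
  then show False by (simp add: c_def)
qed

lemma span_eq_if_independent_card_le:
  assumes indep: "independent B" and sub: "B \<subseteq> span A" and fin: "finite A"
    and card: "card A \<le> card B"
  shows "span B = span A"
proof
  show "span B \<subseteq> span A" using sub by (simp add: span_minimal)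
  have finB: "finite B" using independent_span_bound[OF fin indep sub] by blast
  show "span A \<subseteq> span B"
  proof (rule span_minimal[OF _ subspace_span], rule subsetI, rule ccontr)
    fix v assume v: "v \<in> A" "v \<notin> span B"
    have "independent (insert v B)" using v(2) indep by (rule independent_insertI)
    moreover have "insert v B \<subseteq> span A" using v(1) sub by (auto intro: span_base)
    ultimately have "card (insert v B) \<le> card A" using independent_span_bound[OF fin] by blast
    moreover have "v \<notin> B" using v(2) span_base by blast
    then have "card (insert v B) = Suc (card B)" using finB by simp
    ultimately show False using card by simp
  qed
qed

end

context
  fixes s :: "'a::field \<Rightarrow> 'b::ring_1 \<Rightarrow> 'b"
  assumes vector_space: "vector_space s"
begin

interpretation vector_space s by (rule vector_space)

lemma vpt_0: "1 \<le> n \<Longrightarrow> vpt s n x 0 = x 1"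
  unfolding vpt_def by (subst sum.mono_neutral_right[of "{1..n}" "{1}"]) auto

lemma sum_scale_vpt:
  "(\<Sum>j\<in>J. s (c j) (vpt s n x (a j))) = (\<Sum>i=1..n. s (\<Sum>j\<in>J. c j * a j ^ (i - 1)) (x i))"
  by (simp add: vpt_def scale_sum_right scale_sum_left sum.swap[of _ J])

text \<open>Expanding a vanishing combination of the \<open>vpt s n x (a j)\<close> in the basis \<open>x\<close>
  yields a Vandermonde system in the points \<open>a j\<close>.\<close>

lemma vpt_scalars_zero:
  assumes x_scalars: "\<forall>c. (\<Sum>i=1..n. s (c i) (x i)) = 0 \<longrightarrow> (\<forall>i\<in>{1..n}. c i = 0)"
    and inj: "inj_on a {1..n}"
  shows "\<forall>c. (\<Sum>j=1..n. s (c j) (vpt s n x (a j))) = 0 \<longrightarrow> (\<forall>j\<in>{1..n}. c j = 0)"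
proof (intro allI impI ballI)
  fix c j assume "(\<Sum>j=1..n. s (c j) (vpt s n x (a j))) = 0" and j: "j \<in> {1..n}"
  then have "(\<Sum>i=1..n. s (\<Sum>j=1..n. c j * a j ^ (i - 1)) (x i)) = 0"
    by (simp only: sum_scale_vpt)
  then have vanish: "\<forall>i\<in>{1..n}. (\<Sum>j=1..n. c j * a j ^ (i - 1)) = 0"
    by (rule mp[OF spec[OF x_scalars]])
  have "(\<Sum>j=1..n. c j * a j ^ k) = 0" if "k < card {1..n}" for k
  proof -
    have "Suc k \<in> {1..n}" using that by simp
    from bspec[OF vanish this] show ?thesis by simp
  qed
  then show "c j = 0" using vandermonde_lincomb_eq_0[OF _ inj _ j] by blast
qed

lemma vpt_basis:
  assumes inj_x: "inj_on x {1..n}" and indep_x: "independent (x ` {1..n})"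
    and inj_a: "inj_on a {1..n}"
  shows "inj_on (\<lambda>j. vpt s n x (a j)) {1..n}"
    and "independent ((\<lambda>j. vpt s n x (a j)) ` {1..n})"
    and "span ((\<lambda>j. vpt s n x (a j)) ` {1..n}) = span (x ` {1..n})"
proof -
  let ?b = "\<lambda>j. vpt s n x (a j)"
  have "\<forall>c. (\<Sum>i=1..n. s (c i) (x i)) = 0 \<longrightarrow> (\<forall>i\<in>{1..n}. c i = 0)"
    using indep_x independent_inj_image_iff[OF inj_x finite_atLeastAtMost] by blast
  then have scalars: "\<forall>c. (\<Sum>j=1..n. s (c j) (?b j)) = 0 \<longrightarrow> (\<forall>j\<in>{1..n}. c j = 0)"
    using inj_a by (rule vpt_scalars_zero)
  show inj_b: "inj_on ?b {1..n}" by (rule inj_on_if_scalars_zero[OF scalars]) simp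
  show indep_b: "independent (?b ` {1..n})"
    using scalars independent_inj_image_iff[OF inj_b finite_atLeastAtMost] by blast
  have "vpt s n x \<alpha> \<in> span (x ` {1..n})" for \<alpha>
    unfolding vpt_def by (intro span_sum span_scale span_base) auto
  then have "?b ` {1..n} \<subseteq> span (x ` {1..n})" by auto
  moreover have "card (x ` {1..n}) \<le> card (?b ` {1..n})"
    using inj_x inj_b by (simp add: card_image)
  ultimately show "span (?b ` {1..n}) = span (x ` {1..n})"
    using indep_b by (intro span_eq_if_independent_card_le) auto
qed

end

section \<open>Finite-dimensional algebras\<close>

lemma units_of_alg_mult:
  assumes "a \<in> units_of_alg" and "b \<in> units_of_alg"
  shows "a * b \<in> units_of_alg"
proof -
  obtain a' b' where "a * a' = 1" "a' * a = 1" "b * b' = 1" "b' * b = 1"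
    using assms by (auto simp: units_of_alg_def)
  moreover have "(a * b) * (b' * a') = a * ((b * b') * a')" "(b' * a') * (a * b) = b' * ((a' * a) * b)"
    by (simp_all add: mult.assoc)
  ultimately show ?thesis unfolding units_of_alg_def by auto
qed

lemma k_algebra_vector_space: "k_algebra s \<Longrightarrow> vector_space s"
  by (simp add: k_algebra_def)

lemma k_algebra_scale_mult:
  assumes "k_algebra s"
  shows "s c y * z = s c (y * z)" and "y * s c z = s c (y * z)"
  using assms unfolding k_algebra_def by metis+

lemma k_algebra_linear_mult_left:
  assumes "k_algebra s"
  shows "Vector_Spaces.linear s s (\<lambda>y. a * y)"
proof -
  interpret vector_space s using assms by (rule k_algebra_vector_space)
  show ?thesis
    by (rule linear_module_homI)
       (auto simp: module_hom_iff module_iff_vector_space vector_space_axioms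
          distrib_left k_algebra_scale_mult[OF assms])
qed

lemma fin_dim_alg_finite_dimensional:
  assumes "k_algebra s" and "fin_dim_alg s"
  obtains B where "finite_dimensional_vector_space s B"
proof -
  interpret vector_space s using assms(1) by (rule k_algebra_vector_space)
  obtain F where F: "finite F" "span F = UNIV" using assms(2) unfolding fin_dim_alg_def by blast
  obtain B where B: "independent B" "UNIV \<subseteq> span B" using basis_exists[of UNIV] by blast
  have "finite B" using independent_span_bound[OF F(1) B(1)] F(2) by auto
  with B have "finite_dimensional_vector_space s B" by unfold_locales auto
  then show thesis by (rule that)
qed

context finite_dimensional_vector_space
begin

lemma sum_representation_enum:
  fixes m :: nat
  assumes "bij_betw b {..<m} Basis"
  shows "(\<Sum>c<m. scale (representation Basis w (b c)) (b c)) = w"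
  using sum_representation_eq[OF independent_Basis _ finite_Basis order_refl, of w]
  by (simp add: span_Basis sum.reindex_bij_betw[OF assms, of "\<lambda>u. scale (representation Basis w u) u"])

lemma representation_enum_sum:
  fixes m :: nat
  assumes b: "bij_betw b {..<m} Basis" and r: "r < m"
  shows "representation Basis (\<Sum>c<m. scale (v c) (b c)) (b r) = v r"
proof -
  have basis: "representation Basis (b c) (b r) = (if c = r then 1 else 0)" if "c < m" for c
  proof -
    have "b c \<in> Basis" "b r = b c \<longleftrightarrow> c = r"
      using that r b by (auto simp: bij_betw_def inj_on_def)
    then show ?thesis by (simp add: representation_basis[OF independent_Basis])
  qed
  have "representation Basis (\<Sum>c<m. scale (v c) (b c)) (b r) = (\<Sum>c<m. v c * representation Basis (b c) (b r))"
    by (simp add: representation_sum[OF independent_Basis] representation_scale[OF independent_Basis] span_Basis)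
  also have "\<dots> = (\<Sum>c<m. if c = r then v c else 0)"
    using basis by (intro sum.cong) auto
  also have "\<dots> = v r" using r by simp
  finally show ?thesis .
qed

lemma det_coordinate_matrix_eq_0_iff:
  fixes m :: nat
  assumes b: "bij_betw b {..<m} Basis" and f: "Vector_Spaces.linear scale scale f"
  shows "det (mat m m (\<lambda>(r, c). representation Basis (f (b c)) (b r))) = 0 \<longleftrightarrow>
    (\<exists>w. w \<noteq> 0 \<and> f w = 0)"
    (is "det ?M = 0 \<longleftrightarrow> _")
proof -
  interpret f: Vector_Spaces.linear scale scale f by (rule f)
  have M_carrier: "?M \<in> carrier_mat m m" by simp
  define emb where "emb v = (\<Sum>c<m. scale (v $ c) (b c))" for v
  have M_mult: "(?M *\<^sub>v v) $ r = representation Basis (f (emb v)) (b r)"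
    if "r < m" "v \<in> carrier_vec m" for v r
    using that
    by (simp add: emb_def f.sum f.scale representation_sum[OF independent_Basis]
        representation_scale[OF independent_Basis] span_Basis scalar_prod_def lessThan_atLeast0 mult.commute)
  have emb_coords: "emb (vec m (\<lambda>c. representation Basis w (b c))) = w" for w
    using sum_representation_enum[OF b] by (simp add: emb_def)
  have emb_eq_0: "v = 0\<^sub>v m" if "v \<in> carrier_vec m" "emb v = 0" for v
    using that representation_enum_sum[OF b, of _ "\<lambda>c. v $ c"]
    by (intro eq_vecI) (auto simp: emb_def representation_zero)
  show ?thesis
  proof
    assume "det ?M = 0"
    then obtain v where v: "v \<in> carrier_vec m" "v \<noteq> 0\<^sub>v m" "?M *\<^sub>v v = 0\<^sub>v m"
      using det_0_iff_vec_prod_zero_field[OF M_carrier] by blast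
    have "representation Basis (f (emb v)) (b r) = 0" if "r < m" for r
      using M_mult[OF that v(1)] v(3) that by simp
    then have "f (emb v) = 0" using sum_representation_enum[OF b, of "f (emb v)"] by simp
    moreover have "emb v \<noteq> 0" using emb_eq_0 v(1,2) by blast
    ultimately show "\<exists>w. w \<noteq> 0 \<and> f w = 0" by blast
  next
    assume "\<exists>w. w \<noteq> 0 \<and> f w = 0"
    then obtain w where w: "w \<noteq> 0" "f w = 0" by blast
    let ?v = "vec m (\<lambda>c. representation Basis w (b c))"
    have "?v \<noteq> 0\<^sub>v m"
    proof
      assume "?v = 0\<^sub>v m"
      then have "emb ?v = 0" by (auto simp: emb_def intro: sum.neutral)
      with emb_coords w(1) show False by simp
    qed
    moreover have "?M *\<^sub>v ?v = 0\<^sub>v m"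
      using M_mult[of _ ?v] w(2) by (intro eq_vecI) (auto simp: emb_coords representation_zero)
    ultimately show "det ?M = 0"
      using det_0_iff_vec_prod_zero_field[OF M_carrier] vec_carrier[of m] by blast
  qed
qed

end

lemma fin_dim_alg_unit_iff:
  fixes s :: "'a::field \<Rightarrow> 'b::ring_1 \<Rightarrow> 'b" and a :: 'b
  assumes ka: "k_algebra s" and fd: "fin_dim_alg s"
  shows "a \<in> units_of_alg \<longleftrightarrow> (\<forall>w. a * w = 0 \<longrightarrow> w = 0)"
proof
  assume "a \<in> units_of_alg"
  then obtain a' where "a' * a = 1" by (auto simp: units_of_alg_def)
  then show "\<forall>w. a * w = 0 \<longrightarrow> w = 0" by (metis mult.assoc mult_1 mult_zero_right)
next
  assume kernel: "\<forall>w. a * w = 0 \<longrightarrow> w = 0"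
  obtain B where B: "finite_dimensional_vector_space s B"
    using ka fd by (rule fin_dim_alg_finite_dimensional)
  have "inj (\<lambda>y. a * y)"
    using kernel by (intro injI) (metis eq_iff_diff_eq_0 right_diff_distrib)
  then have "surj (\<lambda>y. a * y)"
    by (rule finite_dimensional_vector_space.linear_inj_imp_surj[OF B k_algebra_linear_mult_left[OF ka]])
  then obtain a' where a': "a * a' = 1" by (metis surjD)
  then have "a * (a' * a - 1) = 0" by (simp add: right_diff_distrib mult.assoc[symmetric])
  then have "a' * a - 1 = 0" using kernel by blast
  then have "a' * a = 1" by simp
  with a' show "a \<in> units_of_alg" by (auto simp: units_of_alg_def)
qed

lemma fin_dim_alg_left_mult_matrix:
  fixes s :: "'a::field \<Rightarrow> 'b::ring_1 \<Rightarrow> 'b"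
  assumes ka: "k_algebra s" and fd: "fin_dim_alg s"
  obtains m and L :: "'b \<Rightarrow> 'a mat" where
    "\<And>a. det (L a) = 0 \<longleftrightarrow> (\<exists>w. w \<noteq> 0 \<and> a * w = 0)"
    "\<And>a. L a \<in> carrier_mat m m"
    "\<And>I f y r c. r < m \<Longrightarrow> c < m \<Longrightarrow>
       L (\<Sum>i\<in>I. s (f i) (y i)) $$ (r, c) = (\<Sum>i\<in>I. f i * L (y i) $$ (r, c))"
proof -
  obtain B where "finite_dimensional_vector_space s B" using ka fd by (rule fin_dim_alg_finite_dimensional)
  then interpret finite_dimensional_vector_space s B .
  obtain b where b: "bij_betw b {..<card B} B"
    using ex_bij_betw_nat_finite[OF finite_Basis] by (auto simp: lessThan_atLeast0)
  define L where "L a = mat (card B) (card B) (\<lambda>(r, c). representation B (a * b c) (b r))" for a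
  show thesis
  proof (rule that)
    show "det (L a) = 0 \<longleftrightarrow> (\<exists>w. w \<noteq> 0 \<and> a * w = 0)" for a
      unfolding L_def using b k_algebra_linear_mult_left[OF ka] by (rule det_coordinate_matrix_eq_0_iff)
    show "L a \<in> carrier_mat (card B) (card B)" for a by (simp add: L_def)
    fix I f y r c assume "r < card B" "c < card B"
    moreover have "(\<Sum>i\<in>I. s (f i) (y i)) * b c = (\<Sum>i\<in>I. s (f i) (y i * b c))"
      by (simp add: sum_distrib_right k_algebra_scale_mult[OF ka])
    ultimately show "L (\<Sum>i\<in>I. s (f i) (y i)) $$ (r, c) = (\<Sum>i\<in>I. f i * L (y i) $$ (r, c))"
      by (simp add: L_def representation_sum[OF independent_Basis]
          representation_scale[OF independent_Basis] span_Basis)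
  qed
qed

lemma det_map_poly_mat_finite_zeros:
  fixes P :: "'a::idom poly mat"
  assumes "det (map_mat (\<lambda>p. poly p \<beta>) P) \<noteq> 0"
  shows "finite {\<alpha>. det (map_mat (\<lambda>p. poly p \<alpha>) P) = 0}"
proof -
  have det_eval: "det (map_mat (\<lambda>p. poly p \<alpha>) P) = poly (det P) \<alpha>" for \<alpha>
  proof -
    interpret comm_ring_hom "\<lambda>p. poly p \<alpha>" by unfold_locales auto
    show ?thesis by simp
  qed
  then have "det P \<noteq> 0" using assms by auto
  then show ?thesis unfolding det_eval by (rule poly_roots_finite)
qed

text \<open>Units are detected by a determinant that is polynomial in the parameter.\<close>

lemma fin_dim_alg_finite_nonunits:
  fixes s :: "'a::field \<Rightarrow> 'b::ring_1 \<Rightarrow> 'b" and I :: "'i set"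
  assumes ka: "k_algebra s" and fd: "fin_dim_alg s"
    and unit: "(\<Sum>i\<in>I. s (\<beta> ^ e i) (y i)) \<in> units_of_alg"
  shows "finite {\<alpha>. (\<Sum>i\<in>I. s (\<alpha> ^ e i) (y i)) \<notin> units_of_alg}"
proof -
  obtain m L where singular: "\<And>a. det (L a) = 0 \<longleftrightarrow> (\<exists>w. w \<noteq> 0 \<and> a * w = 0)"
    and carrier: "\<And>a. L a \<in> carrier_mat m m"
    and entries: "\<And>(J :: 'i set) f y r c. r < m \<Longrightarrow> c < m \<Longrightarrow>
       L (\<Sum>i\<in>J. s (f i) (y i)) $$ (r, c) = (\<Sum>i\<in>J. f i * L (y i) $$ (r, c))"
    using ka fd by (rule fin_dim_alg_left_mult_matrix) blast
  have unit_iff: "a \<in> units_of_alg \<longleftrightarrow> det (L a) \<noteq> 0" for a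
    using fin_dim_alg_unit_iff[OF ka fd] singular by blast
  define P where "P = mat m m (\<lambda>(r, c). \<Sum>i\<in>I. monom (L (y i) $$ (r, c)) (e i))"
  have dims: "dim_row (L a) = m" "dim_col (L a) = m" for a using carrier[of a] by auto
  have eval: "map_mat (\<lambda>p. poly p \<alpha>) P = L (\<Sum>i\<in>I. s (\<alpha> ^ e i) (y i))" for \<alpha>
    by (intro eq_matI) (auto simp: P_def dims entries poly_sum poly_monom mult.commute)
  have "finite {\<alpha>. det (map_mat (\<lambda>p. poly p \<alpha>) P) = 0}"
    using unit by (intro det_map_poly_mat_finite_zeros[where \<beta> = \<beta>]) (simp add: eval unit_iff)
  then show ?thesis by (simp add: eval unit_iff)
qed

section \<open>Finite products of fields\<close>

lemma prod_fields_alg_nonunit_annihilated: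
  fixes s :: "'a::field \<Rightarrow> 'b::ring_1 \<Rightarrow> 'b"
  assumes "prod_fields_alg s"
  obtains E :: "'b set" where "finite E" "0 \<notin> E" "\<And>a. a \<notin> units_of_alg \<Longrightarrow> \<exists>e\<in>E. e * a = 0"
proof -
  obtain E :: "'b set" where comm: "\<forall>x y :: 'b. x * y = y * x"
    and E: "finite E" "0 \<notin> E" "\<forall>e\<in>E. e * e = e" "\<forall>e\<in>E. \<forall>f\<in>E. e \<noteq> f \<longrightarrow> e * f = 0"
      "sum id E = 1" "\<forall>e\<in>E. \<forall>x. e * x \<noteq> 0 \<longrightarrow> (\<exists>y. (e * x) * (e * y) = e)"
    using assms unfolding prod_fields_alg_def by (elim exE conjE) (rule that)
  have "\<exists>e\<in>E. e * a = 0" if nonunit: "a \<notin> units_of_alg" for a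
  proof (rule ccontr)
    assume "\<not> (\<exists>e\<in>E. e * a = 0)"
    then have "\<forall>e\<in>E. \<exists>y. (e * a) * (e * y) = e" using E(6) by blast
    from bchoice[OF this] obtain y where y: "\<forall>e\<in>E. (e * a) * (e * y e) = e" ..
    have "a * (\<Sum>e\<in>E. e * y e) = (\<Sum>e\<in>E. (e * a) * (e * y e))"
      unfolding sum_distrib_left
    proof (rule sum.cong)
      fix e assume "e \<in> E"
      have "(e * a) * (e * y e) = (a * e) * (e * y e)" using comm by simp
      also have "\<dots> = a * ((e * e) * y e)" by (simp add: mult.assoc)
      also have "\<dots> = a * (e * y e)" using E(3) \<open>e \<in> E\<close> by simp
      finally show "a * (e * y e) = (e * a) * (e * y e)" by simp
    qed simp
    also have "\<dots> = 1" using y E(5) by simp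
    finally have "a * (\<Sum>e\<in>E. e * y e) = 1" .
    moreover have "(\<Sum>e\<in>E. e * y e) * a = a * (\<Sum>e\<in>E. e * y e)" using comm by blast
    ultimately have "a \<in> units_of_alg" unfolding units_of_alg_def by auto
    with nonunit show False by simp
  qed
  with E(1,2) show thesis by (rule that)
qed

lemma finite_vpt_annihilated:
  fixes s :: "'a::field \<Rightarrow> 'b::ring_1 \<Rightarrow> 'b"
  assumes ka: "k_algebra s" and inj_x: "inj_on x {1..n}"
    and indep: "\<not> module.dependent s (x ` {1..n})" and n: "1 \<le> n" and e: "e * x 1 \<noteq> 0"
  shows "finite {\<alpha>. e * vpt s n x \<alpha> = 0}"
proof (rule ccontr)
  have vs: "vector_space s" using ka by (rule k_algebra_vector_space)
  interpret vector_space s by (rule vs)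
  assume "infinite {\<alpha>. e * vpt s n x \<alpha> = 0}"
  then obtain S where S: "S \<subseteq> {\<alpha>. e * vpt s n x \<alpha> = 0}" "finite S" "card S = n"
    using infinite_arbitrarily_large by blast
  then obtain a where a: "bij_betw a {1..n} S" using ex_bij_betw_nat_finite_1 by blast
  let ?B = "(\<lambda>j. vpt s n x (a j)) ` {1..n}"
  have "subspace {w. e * w = 0}"
    by (auto simp: subspace_def distrib_left k_algebra_scale_mult[OF ka])
  moreover have "?B \<subseteq> {w. e * w = 0}" using a S(1) by (auto simp: bij_betw_def)
  ultimately have "span ?B \<subseteq> {w. e * w = 0}" by (rule span_minimal[rotated])
  moreover have "span ?B = span (x ` {1..n})"
    using a by (intro vpt_basis(3)[OF vs inj_x indep]) (simp add: bij_betw_def)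
  moreover have "x 1 \<in> span (x ` {1..n})" using n by (intro span_base) auto
  ultimately show False using e by auto
qed

lemma prod_fields_alg_finite_nonunits_vpt:
  fixes s :: "'a::field \<Rightarrow> 'b::ring_1 \<Rightarrow> 'b"
  assumes ka: "k_algebra s" and pf: "prod_fields_alg s" and inj_x: "inj_on x {1..n}"
    and indep: "\<not> module.dependent s (x ` {1..n})" and n: "1 \<le> n" and x1: "x 1 \<in> units_of_alg"
  shows "finite {\<alpha>. vpt s n x \<alpha> \<notin> units_of_alg}"
proof -
  obtain E :: "'b set" where E: "finite E" "0 \<notin> E" and annihilated: "\<And>a. a \<notin> units_of_alg \<Longrightarrow> \<exists>e\<in>E. e * a = 0"
    using pf by (rule prod_fields_alg_nonunit_annihilated) (rule that)
  obtain x1' where x1': "x 1 * x1' = 1" using x1 by (auto simp: units_of_alg_def)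
  have "e * x 1 \<noteq> 0" if "e \<in> E" for e
  proof
    assume "e * x 1 = 0"
    moreover have "e = e * x 1 * x1'" using x1' by (simp add: mult.assoc)
    ultimately show False using that E(2) by simp
  qed
  then have "finite (\<Union>e\<in>E. {\<alpha>. e * vpt s n x \<alpha> = 0})"
    using E(1) by (intro finite_UN_I finite_vpt_annihilated[OF ka inj_x indep n])
  moreover have "{\<alpha>. vpt s n x \<alpha> \<notin> units_of_alg} \<subseteq> (\<Union>e\<in>E. {\<alpha>. e * vpt s n x \<alpha> = 0})"
    using annihilated by blast
  ultimately show ?thesis by (rule finite_subset[rotated])
qed

section \<open>Banach algebras\<close>

lemma one_minus_mult_sum_power:
  fixes z :: "'a::ring_1"
  shows "(1 - z) * (\<Sum>k<m. z ^ k) = 1 - z ^ m"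
proof -
  have "(1 - z) * (\<Sum>k<m. z ^ k) = (\<Sum>k<m. z ^ k - z ^ Suc k)"
    by (simp add: sum_distrib_left left_diff_distrib)
  also have "\<dots> = 1 - z ^ m" by (simp only: sum_lessThan_telescope') simp
  finally show ?thesis .
qed

lemma sum_power_mult_one_minus:
  fixes z :: "'a::ring_1"
  shows "(\<Sum>k<m. z ^ k) * (1 - z) = 1 - z ^ m"
proof -
  have "(\<Sum>k<m. z ^ k) * (1 - z) = (\<Sum>k<m. z ^ k * (1 - z))" by (rule sum_distrib_right)
  also have "\<dots> = (\<Sum>k<m. z ^ k - z ^ Suc k)" by (simp only: right_diff_distrib mult_1_right power_Suc2)
  also have "\<dots> = 1 - z ^ m" by (simp only: sum_lessThan_telescope') simp
  finally show ?thesis .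
qed

locale complete_ring_norm =
  fixes N :: "'b::ring_1 \<Rightarrow> real"
  assumes N_nonneg: "0 \<le> N x"
    and N_eq_0_iff: "N x = 0 \<longleftrightarrow> x = 0"
    and N_triangle: "N (x + y) \<le> N x + N y"
    and N_minus: "N (- x) = N x"
    and N_submult: "N (x * y) \<le> N x * N y"
    and N_complete: "(\<And>e. 0 < e \<Longrightarrow> \<exists>M. \<forall>m\<ge>M. \<forall>k\<ge>M. N (f m - f k) < e) \<Longrightarrow>
      \<exists>L. (\<lambda>m. N (f m - L)) \<longlonglongrightarrow> 0"
begin

lemma N_zero [simp]: "N 0 = 0"
  by (simp add: N_eq_0_iff)

lemma N_sum_le: "N (\<Sum>i\<in>A. f i) \<le> (\<Sum>i\<in>A. N (f i))"
proof (induction A rule: infinite_finite_induct)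
  case (insert a A)
  then show ?case using N_triangle[of "f a" "\<Sum>i\<in>A. f i"] by simp
qed simp_all

lemma N_power_le: "N (z ^ Suc k) \<le> N z ^ Suc k"
proof (induction k)
  case (Suc k)
  have "N (z ^ Suc (Suc k)) \<le> N (z ^ Suc k) * N z"
    using N_submult[of "z ^ Suc k" z] by (simp only: power_Suc2)
  also have "\<dots> \<le> N z ^ Suc k * N z" using Suc N_nonneg by (rule mult_right_mono)
  finally show ?case by (simp only: power_Suc2)
qed simp

lemma summable_N_power: "N z < 1 \<Longrightarrow> summable (\<lambda>k. N (z ^ k))"
  using N_power_le[of z] N_nonneg
  by (intro summable_comparison_test'[where N = 1, OF summable_geometric[of "N z"]])
     (auto simp: Suc_le_eq gr0_conv_Suc)

lemma partial_sums_Cauchy: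
  assumes summable: "summable (\<lambda>k. N (f k))" and e: "0 < e"
  shows "\<exists>M. \<forall>m\<ge>M. \<forall>k\<ge>M. N ((\<Sum>j<m. f j) - (\<Sum>j<k. f j)) < e"
proof -
  obtain M where M: "\<forall>m\<ge>M. \<forall>n. norm (\<Sum>j\<in>{m..<n}. N (f j)) < e"
    using summable e unfolding summable_Cauchy by blast
  have ordered: "N ((\<Sum>j<m. f j) - (\<Sum>j<k. f j)) < e" if "k \<le> m" "M \<le> k" for m k
  proof -
    have "(\<Sum>j<m. f j) - (\<Sum>j<k. f j) = (\<Sum>j\<in>{k..<m}. f j)"
      using that by (simp add: lessThan_atLeast0 sum_diff_nat_ivl)
    then have "N ((\<Sum>j<m. f j) - (\<Sum>j<k. f j)) \<le> (\<Sum>j\<in>{k..<m}. N (f j))" by (simp add: N_sum_le)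
    also have "\<dots> < e"
      using M[rule_format, of k m] that abs_ge_self by (metis real_norm_def le_less_trans)
    finally show ?thesis .
  qed
  have "N ((\<Sum>j<m. f j) - (\<Sum>j<k. f j)) < e" if "M \<le> m" "M \<le> k" for m k
    using ordered[of k m] ordered[of m k] that N_minus[of "(\<Sum>j<k. f j) - (\<Sum>j<m. f j)"]
    by (cases "k \<le> m") auto
  then show ?thesis by blast
qed

text \<open>Neumann series: the limit of the partial sums of \<open>\<Sum> z^k\<close> inverts \<open>1 - z\<close>
  on both sides.\<close>

lemma one_minus_unit:
  assumes z: "N z < 1"
  shows "1 - z \<in> units_of_alg"
proof -
  define S where "S m = (\<Sum>k<m. z ^ k)" for m
  have summable: "summable (\<lambda>k. N (z ^ k))" using z by (rule summable_N_power)
  have "\<exists>M. \<forall>m\<ge>M. \<forall>k\<ge>M. N (S m - S k) < e" if "0 < e" for e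
    unfolding S_def using summable that by (rule partial_sums_Cauchy)
  from N_complete[of S, OF this] obtain L where L: "(\<lambda>m. N (S m - L)) \<longlonglongrightarrow> 0" ..
  have bound_lim: "(\<lambda>m. N (1 - z) * N (S m - L) + N (z ^ m)) \<longlonglongrightarrow> 0"
    using tendsto_add[OF tendsto_mult_right_zero[OF L] summable_LIMSEQ_zero[OF summable]] by simp
  have eq_1: "w = 1" if bound: "\<And>m. N (w - 1) \<le> N (1 - z) * N (S m - L) + N (z ^ m)" for w
  proof -
    have "N (w - 1) \<le> 0" using bound by (intro LIMSEQ_le_const[OF bound_lim]) auto
    then show ?thesis using N_nonneg[of "w - 1"] N_eq_0_iff[of "w - 1"] by simp
  qed
  have "(1 - z) * L = 1"
  proof (rule eq_1)
    fix m
    have "(1 - z) * L - 1 = (1 - z) * (L - S m) + - (z ^ m)"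
      by (simp add: S_def right_diff_distrib one_minus_mult_sum_power)
    then show "N ((1 - z) * L - 1) \<le> N (1 - z) * N (S m - L) + N (z ^ m)"
      using N_triangle N_submult[of "1 - z" "L - S m"] N_minus[of "z ^ m"] N_minus[of "S m - L"]
      by (smt (verit) minus_diff_eq)
  qed
  moreover have "L * (1 - z) = 1"
  proof (rule eq_1)
    fix m
    have "L * (1 - z) - 1 = (L - S m) * (1 - z) + - (z ^ m)"
      by (simp add: S_def left_diff_distrib sum_power_mult_one_minus)
    then show "N (L * (1 - z) - 1) \<le> N (1 - z) * N (S m - L) + N (z ^ m)"
      using N_triangle N_submult[of "L - S m" "1 - z"] N_minus[of "z ^ m"] N_minus[of "S m - L"]
      by (smt (verit) minus_diff_eq mult.commute)
  qed
  ultimately show ?thesis unfolding units_of_alg_def by blast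
qed

lemma add_small_unit:
  assumes u: "u * v = 1" "v * u = 1" and small: "N v * N r < 1"
  shows "u + r \<in> units_of_alg"
proof -
  have "u + r = u * (1 - - (v * r))" using u by (simp add: distrib_left mult.assoc[symmetric])
  moreover have "N (- (v * r)) < 1" using N_minus N_submult[of v r] small by simp
  then have "1 - - (v * r) \<in> units_of_alg" by (rule one_minus_unit)
  moreover have "u \<in> units_of_alg" using u by (auto simp: units_of_alg_def)
  ultimately show ?thesis using units_of_alg_mult by metis
qed

end

lemma banach_alg_complete_ring_norm:
  fixes s :: "'a::field \<Rightarrow> 'b::ring_1 \<Rightarrow> 'b"
  assumes ka: "k_algebra s" and ba: "banach_alg s"
  obtains \<phi> :: "'a \<Rightarrow> complex" and N :: "'b \<Rightarrow> real" where
    "complete_ring_norm N" "\<And>c x. N (s c x) = cmod (\<phi> c) * N x" "\<And>c k. \<phi> (c ^ k) = \<phi> c ^ k"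
    "inj \<phi>" "\<real> \<subseteq> range \<phi>"
proof -
  interpret vector_space s using ka by (rule k_algebra_vector_space)
  obtain \<phi> :: "'a \<Rightarrow> complex" and N :: "'b \<Rightarrow> real" where
    inj: "inj \<phi>" and hom: "\<forall>a b. \<phi> (a + b) = \<phi> a + \<phi> b \<and> \<phi> (a * b) = \<phi> a * \<phi> b"
    and one: "\<phi> 1 = 1" and range: "range \<phi> = \<real> \<or> range \<phi> = UNIV"
    and nonneg: "\<forall>x. N x \<ge> 0" and eq_0: "\<forall>x. N x = 0 \<longleftrightarrow> x = 0"
    and triangle: "\<forall>x y. N (x + y) \<le> N x + N y" and scale: "\<forall>c x. N (s c x) = cmod (\<phi> c) * N x"
    and submult: "\<forall>x y. N (x * y) \<le> N x * N y"
    and complete: "\<forall>f :: nat \<Rightarrow> 'b. (\<forall>e>0. \<exists>M. \<forall>m\<ge>M. \<forall>k\<ge>M. N (f m - f k) < e) \<longrightarrow>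
       (\<exists>L. \<forall>e>0. \<exists>M. \<forall>m\<ge>M. N (f m - L) < e)"
    using ba unfolding banach_alg_def by (elim exE conjE) (rule that)
  have "\<phi> 0 = 0" using hom[rule_format, of 0 0] by simp
  then have "\<phi> (-1) = -1" using hom[rule_format, of "-1" 1] one by (simp add: eq_neg_iff_add_eq_0)
  then have minus: "N (- x) = N x" for x using scale[rule_format, of "-1" x] by (simp add: scale_minus_left)
  have norm: "complete_ring_norm N"
  proof
    fix f :: "nat \<Rightarrow> 'b" assume "\<And>e. 0 < e \<Longrightarrow> \<exists>M. \<forall>m\<ge>M. \<forall>k\<ge>M. N (f m - f k) < e"
    then obtain L where "\<forall>e>0. \<exists>M. \<forall>m\<ge>M. N (f m - L) < e" using complete[rule_format, of f] by blast
    then have "(\<lambda>m. N (f m - L)) \<longlonglongrightarrow> 0" using nonneg by (intro LIMSEQ_I) auto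
    then show "\<exists>L. (\<lambda>m. N (f m - L)) \<longlonglongrightarrow> 0" ..
  qed (use nonneg eq_0 triangle minus submult in auto)
  have power: "\<phi> (c ^ k) = \<phi> c ^ k" for c k by (induction k) (simp_all add: one hom)
  have reals: "\<real> \<subseteq> range \<phi>" using range by auto
  show thesis by (rule that) (use norm scale power inj reals in auto)
qed

lemma infinite_small_scalars:
  fixes \<phi> :: "'a \<Rightarrow> complex"
  assumes inj: "inj \<phi>" and reals: "\<real> \<subseteq> range \<phi>" and \<delta>: "0 < \<delta>"
  shows "infinite {c. cmod (\<phi> c) < \<delta>}"
proof
  assume "finite {c. cmod (\<phi> c) < \<delta>}"
  then have "finite (\<phi> ` {c. cmod (\<phi> c) < \<delta>})" by simp
  moreover have "of_real ` {0<..<\<delta>} \<subseteq> \<phi> ` {c. cmod (\<phi> c) < \<delta>}"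
  proof
    fix w :: complex assume "w \<in> of_real ` {0<..<\<delta>}"
    moreover from this obtain c where "w = \<phi> c" using reals by (auto simp: Reals_def)
    ultimately show "w \<in> \<phi> ` {c. cmod (\<phi> c) < \<delta>}" by auto
  qed
  ultimately have "finite (of_real ` {0<..<\<delta>} :: complex set)" by (rule finite_subset[rotated])
  then have "finite {0<..<\<delta>}" by (simp add: finite_image_iff inj_on_def)
  with infinite_Ioo[OF \<delta>] show False by blast
qed

text \<open>For \<open>\<bar>\<alpha>\<bar> \<le> 1\<close> (measured through \<open>\<phi>\<close>) we have
  \<open>N (vpt s n x \<alpha> - x 1) \<le> \<bar>\<alpha>\<bar> (N (x 2) + \<dots> + N (x n))\<close>, so near \<open>0\<close> the curve is a
  small perturbation of the unit \<open>x 1\<close>.\<close>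

lemma banach_alg_infinite_units_vpt:
  fixes s :: "'a::field \<Rightarrow> 'b::ring_1 \<Rightarrow> 'b"
  assumes ka: "k_algebra s" and ba: "banach_alg s" and x1: "x 1 \<in> units_of_alg" and n: "1 \<le> n"
  shows "infinite {\<alpha>. vpt s n x \<alpha> \<in> units_of_alg}"
proof -
  interpret vector_space s using ka by (rule k_algebra_vector_space)
  obtain \<phi> N where "complete_ring_norm N" and scale: "\<And>c x. N (s c x) = cmod (\<phi> c) * N x"
    and power: "\<And>c k. \<phi> (c ^ k) = \<phi> c ^ k" and inj: "inj \<phi>" and reals: "\<real> \<subseteq> range \<phi>"
    using ka ba by (rule banach_alg_complete_ring_norm) (rule that)
  interpret complete_ring_norm N by fact
  obtain v where v: "x 1 * v = 1" "v * x 1 = 1" using x1 by (auto simp: units_of_alg_def)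
  define R where "R \<alpha> = (\<Sum>i=2..n. s (\<alpha> ^ (i - 1)) (x i))" for \<alpha>
  define C where "C = (\<Sum>i=2..n. N (x i))"
  define \<delta> where "\<delta> = 1 / (N v * C + 1)"
  have "0 \<le> C" by (simp add: C_def N_nonneg sum_nonneg)
  then have NvC: "0 \<le> N v * C" by (simp add: N_nonneg)
  then have \<delta>: "0 < \<delta>" "\<delta> \<le> 1" "\<delta> * (N v * C + 1) = 1" by (simp_all add: \<delta>_def field_simps)
  have vpt_split: "vpt s n x \<alpha> = x 1 + R \<alpha>" for \<alpha>
    using n by (simp add: vpt_def R_def sum.atLeast_Suc_atMost numeral_2_eq_2)
  have "vpt s n x \<alpha> \<in> units_of_alg" if small: "cmod (\<phi> \<alpha>) < \<delta>" for \<alpha>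
  proof -
    let ?t = "cmod (\<phi> \<alpha>)"
    have "N (R \<alpha>) \<le> (\<Sum>i=2..n. N (s (\<alpha> ^ (i - 1)) (x i)))" unfolding R_def by (rule N_sum_le)
    also have "\<dots> = (\<Sum>i=2..n. ?t ^ (i - 1) * N (x i))" by (simp add: scale power norm_power)
    also have "\<dots> \<le> (\<Sum>i=2..n. ?t * N (x i))"
    proof (rule sum_mono)
      fix i assume "i \<in> {2..n}"
      then have "?t ^ (i - 1) \<le> ?t ^ 1" using small \<delta>(2) by (intro power_decreasing) auto
      then show "?t ^ (i - 1) * N (x i) \<le> ?t * N (x i)" by (simp add: N_nonneg mult_right_mono)
    qed
    also have "\<dots> = ?t * C" by (simp add: C_def sum_distrib_left)
    finally have "N v * N (R \<alpha>) \<le> N v * (?t * C)" by (simp add: N_nonneg mult_left_mono)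
    also have "\<dots> \<le> ?t * (N v * C + 1)" by (simp add: algebra_simps)
    also have "\<dots> < \<delta> * (N v * C + 1)" using small NvC by (intro mult_strict_right_mono) auto
    finally have "N v * N (R \<alpha>) < 1" using \<delta>(3) by simp
    then show ?thesis unfolding vpt_split by (rule add_small_unit[OF v])
  qed
  then have "{\<alpha>. cmod (\<phi> \<alpha>) < \<delta>} \<subseteq> {\<alpha>. vpt s n x \<alpha> \<in> units_of_alg}" by blast
  then show ?thesis by (rule infinite_super) (rule infinite_small_scalars[OF inj reals \<delta>(1)])
qed

lemma H_s_infinite_units_vpt:
  fixes s :: "'a::field \<Rightarrow> 'b::ring_1 \<Rightarrow> 'b"
  assumes inf: "infinite (UNIV :: 'a set)" and ka: "k_algebra s" and hs: "H_s s"
    and inj_x: "inj_on x {1..n}" and indep: "\<not> module.dependent s (x ` {1..n})"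
    and n: "1 \<le> n" and x1: "x 1 \<in> units_of_alg"
  shows "infinite {\<alpha>. vpt s n x \<alpha> \<in> units_of_alg}"
proof (cases "banach_alg s")
  case True
  with ka x1 n show ?thesis by (intro banach_alg_infinite_units_vpt)
next
  case False
  with hs have "fin_dim_alg s \<or> prod_fields_alg s" by (simp add: H_s_def)
  then have "finite {\<alpha>. vpt s n x \<alpha> \<notin> units_of_alg}"
  proof
    assume fd: "fin_dim_alg s"
    have "vpt s n x 0 \<in> units_of_alg" using vpt_0[OF k_algebra_vector_space[OF ka] n] x1 by simp
    then have "(\<Sum>i\<in>{1..n}. s (0 ^ (i - 1)) (x i)) \<in> units_of_alg" by (simp only: vpt_def)
    then have "finite {\<alpha>. (\<Sum>i\<in>{1..n}. s (\<alpha> ^ (i - 1)) (x i)) \<notin> units_of_alg}"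
      by (rule fin_dim_alg_finite_nonunits[OF ka fd])
    then show ?thesis by (simp only: vpt_def)
  next
    assume "prod_fields_alg s"
    then show ?thesis by (rule prod_fields_alg_finite_nonunits_vpt[OF ka _ inj_x indep n x1])
  qed
  then have "infinite (UNIV - {\<alpha>. vpt s n x \<alpha> \<notin> units_of_alg})"
    using inf by (rule Diff_infinite_finite)
  moreover have "UNIV - {\<alpha>. vpt s n x \<alpha> \<notin> units_of_alg} = {\<alpha>. vpt s n x \<alpha> \<in> units_of_alg}" by blast
  ultimately show ?thesis by simp
qed

theorem lemma2p7:
  fixes s :: "'a::field \<Rightarrow> 'b::ring_1 \<Rightarrow> 'b"
    and V :: "'b set" and n :: nat and x :: "nat \<Rightarrow> 'b"
  assumes "infinite (UNIV :: 'a set)"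
    and "k_algebra s"
    and "H_s s"
    and "module.subspace s V"
    and "vector_space.dim s V = n"
    and "V \<inter> units_of_alg \<noteq> {}"
    and "inj_on x {1..n}"
    and "\<not> module.dependent s (x ` {1..n})"
    and "module.span s (x ` {1..n}) = V"
    and "1 \<le> n"
    and "x 1 \<in> units_of_alg"
  shows "(\<forall>a :: nat \<Rightarrow> 'a. inj_on a {1..n} \<longrightarrow>
            inj_on (\<lambda>j. vpt s n x (a j)) {1..n} \<and>
            \<not> module.dependent s ((\<lambda>j. vpt s n x (a j)) ` {1..n}) \<and>
            module.span s ((\<lambda>j. vpt s n x (a j)) ` {1..n}) = V)
       \<and> infinite {\<alpha>. vpt s n x \<alpha> \<in> units_of_alg}
       \<and> (\<exists>B. B \<subseteq> range (vpt s n x) \<and> B \<subseteq> units_of_alg \<and>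
              \<not> module.dependent s B \<and> module.span s B = V)"
proof -
  note inj_x = assms(7) and indep = assms(8) and span_x = assms(9)
  have vs: "vector_space s" using assms(2) by (rule k_algebra_vector_space)
  have basis: "inj_on (\<lambda>j. vpt s n x (a j)) {1..n} \<and>
      \<not> module.dependent s ((\<lambda>j. vpt s n x (a j)) ` {1..n}) \<and>
      module.span s ((\<lambda>j. vpt s n x (a j)) ` {1..n}) = V" if "inj_on a {1..n}" for a :: "nat \<Rightarrow> 'a"
    using vpt_basis[OF vs inj_x indep that] span_x by simp
  have units: "infinite {\<alpha>. vpt s n x \<alpha> \<in> units_of_alg}"
    using assms(1-3) inj_x indep assms(10,11) by (rule H_s_infinite_units_vpt)
  then obtain S where S: "S \<subseteq> {\<alpha>. vpt s n x \<alpha> \<in> units_of_alg}" "finite S" "card S = n"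
    using infinite_arbitrarily_large by blast
  then obtain a where a: "bij_betw a {1..n} S" using ex_bij_betw_nat_finite_1 by blast
  then have "inj_on a {1..n}" by (simp add: bij_betw_def)
  moreover have "(\<lambda>j. vpt s n x (a j)) ` {1..n} \<subseteq> range (vpt s n x) \<inter> units_of_alg"
    using a S(1) by (auto simp: bij_betw_def)
  ultimately show ?thesis using basis units by blast
qed

end
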